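(* Let $\mathcal{C}_f$ be a CRN stably computing $f:\mathbb{N}^d\to\mathbb{N}$ such that for every CRN $\mathcal{C}_g$ stably computing a function $g:\mathbb{N}\to\mathbb{N}$, the concatenated CRN $\mathcal{C}_{g\circ f}$ stably computes $g\circ f$. Then the CRN obtained from $\mathcal{C}_f$ by removing every reaction that has the output species of $\mathcal{C}_f$ as a reactant (which is output-oblivious) still stably computes $f$.
   Context: A chemical reaction network (CRN) is a pair $(\mathcal{S},\mathcal{R})$ of a finite set of species and a finite set of reactions $(\vec{R},\vec{P})\in\mathbb{N}^{\mathcal{S}}\times\mathbb{N}^{\mathcal{S}}$. A configuration is $\vec{C}\in\mathbb{N}^{\mathcal{S}}$; a reaction is applicable if $\vec{R}\le\vec{C}$ and yields $\vec{C}-\vec{R}+\vec{P}$; reachability is via finite sequences of applicable reactions. To compute $h:\mathbb{N}^k\to\mathbb{N}$ a CRN has input species $X_1,\ldots,X_k$, output species $Y$, leader species $L$; the initial configuration $\vec{I}_{\vec{x}}$ has $\vec{x}(i)$ copies of $X_i$, one $L$, nothing else. $\vec{C}$ is stable if all configurations reachable from it have the same count of $Y$. The CRN stably computes $h$ if for every $\vec{x}$ and every $\vec{C}$ reachable from $\vec{I}_{\vec{x}}$ some stable $\vec{O}$ reachable from $\vec{C}$ has $\vec{O}(Y)=h(\vec{x})$. A CRN is output-oblivious if its output species is never a reactant. The concatenated CRN $\mathcal{C}_{g\circ f}$ is obtained by taking the union of the species and reactions of $\mathcal{C}_f$ and $\mathcal{C}_g$, where the output species of $\mathcal{C}_f$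 is identified with the input species of $\mathcal{C}_g$ and all other species are disjoint; with leaders $L^f$, $L^g$ of $\mathcal{C}_f$, $\mathcal{C}_g$, a new leader $L$ and the reaction $L\to L^f+L^g$ are added. Its inputs are those of $\mathcal{C}_f$, its output is that of $\mathcal{C}_g$. *)

theory Defs
  imports Main
begin

type_synonym 'a config = "'a \<Rightarrow> nat"
type_synonym 'a reaction = "'a config \<times> 'a config"

record 'a crn =
  species   :: "'a set"
  reactions :: "'a reaction set"
  inputs    :: "'a list"
  out_sp    :: "'a"
  leader    :: "'a"

definition wf_crn :: "'a crn \<Rightarrow> bool" where
  "wf_crn C \<longleftrightarrow>
     finite (species C) \<and> finite (reactions C) \<and>
     (\<forall>(R, P) \<in> reactions C. \<forall>s. (R s \<noteq> 0 \<or> P s \<noteq> 0) \<longrightarrow> s \<in> species C) \<and>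
     set (inputs C) \<subseteq> species C \<and> distinct (inputs C) \<and>
     out_sp C \<in> species C \<and> leader C \<in> species C \<and>
     out_sp C \<notin> set (inputs C) \<and> leader C \<notin> set (inputs C) \<and>
     leader C \<noteq> out_sp C"

definition step :: "'a crn \<Rightarrow> 'a config \<Rightarrow> 'a config \<Rightarrow> bool" where
  "step C c c' \<longleftrightarrow>
     (\<exists>(R, P) \<in> reactions C. R \<le> c \<and> c' = (\<lambda>s. c s - R s + P s))"

definition reach :: "'a crn \<Rightarrow> 'a config \<Rightarrow> 'a config \<Rightarrow> bool" where
  "reach C = (step C)\<^sup>*\<^sup>*"

definition init :: "'a crn \<Rightarrow> nat list \<Rightarrow> 'a config" where
  "init C x = (\<lambda>s. (\<Sum>i<length (inputs C). if inputs C ! i = s then x ! i else 0)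
                   + (if s = leader C then 1 else 0))"

definition stable :: "'a crn \<Rightarrow> 'a config \<Rightarrow> bool" where
  "stable C c \<longleftrightarrow> (\<forall>c'. reach C c c' \<longrightarrow> c' (out_sp C) = c (out_sp C))"

definition stably_computes :: "'a crn \<Rightarrow> nat \<Rightarrow> (nat list \<Rightarrow> nat) \<Rightarrow> bool" where
  "stably_computes C d h \<longleftrightarrow>
     length (inputs C) = d \<and>
     (\<forall>x. length x = d \<longrightarrow>
        (\<forall>c. reach C (init C x) c \<longrightarrow>
           (\<exists>o'. reach C c o' \<and> stable C o' \<and> o' (out_sp C) = h x)))"

definition output_oblivious :: "'a crn \<Rightarrow> bool" where
  "output_oblivious C \<longleftrightarrow> (\<forall>(R, P) \<in> reactions C. R (out_sp C) = 0)"

text \<open>Species of the concatenated CRN: disjoint copies of the species of C_f and C_g,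
  plus a fresh leader.  The input species of C_g is identified with the output of C_f.\<close>
datatype ('a, 'b) cspec = SF 'a | SG 'b | SL

definition emb_g :: "'a crn \<Rightarrow> 'b crn \<Rightarrow> 'b \<Rightarrow> ('a, 'b) cspec" where
  "emb_g Cf Cg t = (if t = hd (inputs Cg) then SF (out_sp Cf) else SG t)"

definition lift_f :: "'a config \<Rightarrow> ('a, 'b) cspec config" where
  "lift_f v = (\<lambda>s. case s of SF a \<Rightarrow> v a | _ \<Rightarrow> 0)"

definition lift_g :: "'a crn \<Rightarrow> 'b crn \<Rightarrow> 'b config \<Rightarrow> ('a, 'b) cspec config" where
  "lift_g Cf Cg v = (\<lambda>s. case s of
       SF a \<Rightarrow> (if a = out_sp Cf then v (hd (inputs Cg)) else 0)
     | SG t \<Rightarrow> (if t = hd (inputs Cg) then 0 else v t)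
     | SL \<Rightarrow> 0)"

definition concat_crn :: "'a crn \<Rightarrow> 'b crn \<Rightarrow> ('a, 'b) cspec crn" where
  "concat_crn Cf Cg =
     \<lparr> species = SF ` species Cf \<union> emb_g Cf Cg ` species Cg \<union> {SL},
       reactions =
         (\<lambda>(R, P). (lift_f R, lift_f P)) ` reactions Cf
         \<union> (\<lambda>(R, P). (lift_g Cf Cg R, lift_g Cf Cg P)) ` reactions Cg
         \<union> {((\<lambda>s. if s = SL then 1 else 0),
             (\<lambda>s. (if s = SF (leader Cf) then 1 else 0)
                  + (if s = emb_g Cf Cg (leader Cg) then 1 else 0)))},
       inputs = map SF (inputs Cf),
       out_sp = emb_g Cf Cg (out_sp Cg),
       leader = SL \<rparr>"

definition remove_output_reactant :: "'a crn \<Rightarrow> 'a crn" where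
  "remove_output_reactant C =
     C \<lparr> reactions := {(R, P) \<in> reactions C. R (out_sp C) = 0} \<rparr>"

end

theory Submission imports Defs begin

(* Concatenate C_f with the identity CRN X -> Y.  In the pruned CRN C_r, where the output Y_f of
   C_f is never consumed, the output count only grows; collecting all Y_f into the identity CRN
   shows it never exceeds f x.  Hence from every reachable configuration C_r reaches a stable
   configuration b of maximal output.  If b (Y_f) < f x, the concatenation started from b with
   every Y_f already collected must still produce f x outputs; the first new Y_f it produces comes
   from a run of C_r, which, shifted by the b (Y_f) copies set aside, increases the output of b. *)

lemma step_add: "step C a b \<Longrightarrow> step C (\<lambda>s. a s + v s) (\<lambda>s. b s + v s)"
proof -
  assume "step C a b"
  then obtain R P where RP: "(R, P) \<in> reactions C" "R \<le> a" "b = (\<lambda>s. a s - R s + P s)"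
    unfolding step_def by auto
  then have "R \<le> (\<lambda>s. a s + v s)" "(\<lambda>s. b s + v s) = (\<lambda>s. (a s + v s) - R s + P s)"
    by (auto simp: le_fun_def trans_le_add1 intro!: ext)
  with RP(1) show ?thesis unfolding step_def by auto
qed

lemma reach_add: "reach C a b \<Longrightarrow> reach C (\<lambda>s. a s + v s) (\<lambda>s. b s + v s)"
  unfolding reach_def
  by (induction rule: rtranclp_induct)
     (auto dest: step_add[where v = v] intro: rtranclp.rtrancl_into_rtrancl)

lemma reach_trans: "reach C a b \<Longrightarrow> reach C b c \<Longrightarrow> reach C a c"
  unfolding reach_def by (rule rtranclp_trans)

lemma step_imp_reach: "step C a b \<Longrightarrow> reach C a b"
  unfolding reach_def by (rule r_into_rtranclp)

lemma output_oblivious_step_out_mono: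
  "output_oblivious C \<Longrightarrow> step C a b \<Longrightarrow> a (out_sp C) \<le> b (out_sp C)"
  unfolding output_oblivious_def step_def by auto

lemma output_oblivious_reach_out_mono:
  assumes "output_oblivious C" and "reach C a b"
  shows "a (out_sp C) \<le> b (out_sp C)"
  using assms(2) unfolding reach_def
  by (induction rule: rtranclp_induct) (auto dest: output_oblivious_step_out_mono[OF assms(1)])

lemma output_oblivious_exists_stable:
  assumes oo: "output_oblivious C" and bounded: "\<And>b. reach C c b \<Longrightarrow> b (out_sp C) \<le> N"
  obtains b where "reach C c b" "stable C b"
proof -
  define S where "S = {b (out_sp C) | b. reach C c b}"
  have "finite S"
    by (rule finite_subset[of _ "{..N}"]) (auto simp: S_def dest: bounded)
  moreover have "c (out_sp C) \<in> S" unfolding S_def reach_def by auto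
  ultimately have "Max S \<in> S" by (intro Max_in) auto
  then obtain b where b: "reach C c b" "b (out_sp C) = Max S" unfolding S_def by auto
  have "stable C b"
    unfolding stable_def
  proof (intro allI impI)
    fix b' assume "reach C b b'"
    then have "b' (out_sp C) \<in> S" unfolding S_def using reach_trans[OF b(1)] by auto
    with \<open>finite S\<close> b(2) have "b' (out_sp C) \<le> b (out_sp C)" by simp
    with output_oblivious_reach_out_mono[OF oo \<open>reach C b b'\<close>]
    show "b' (out_sp C) = b (out_sp C)" by simp
  qed
  with b(1) show thesis by (rule that)
qed

lemma remove_output_reactant_simps [simp]:
  "inputs (remove_output_reactant C) = inputs C"
  "out_sp (remove_output_reactant C) = out_sp C"
  "leader (remove_output_reactant C) = leader C"
  "init (remove_output_reactant C) = init C"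
  by (auto simp: remove_output_reactant_def init_def intro!: ext)

lemma output_oblivious_remove_output_reactant: "output_oblivious (remove_output_reactant C)"
  unfolding output_oblivious_def remove_output_reactant_def by auto

lemma step_of_remove_output_reactant: "step (remove_output_reactant C) a b \<Longrightarrow> step C a b"
  unfolding step_def remove_output_reactant_def by auto

definition id_crn :: "nat crn" where
  "id_crn = \<lparr> species = {0, 1, 2},
              reactions = {((\<lambda>s. if s = 0 then 1 else 0), (\<lambda>s. if s = 1 then 1 else 0))},
              inputs = [0], out_sp = 1, leader = 2 \<rparr>"

definition id_config :: "nat \<Rightarrow> nat \<Rightarrow> nat config" where
  "id_config a b = (\<lambda>s. if s = 0 then a else if s = 1 then b else if s = 2 then 1 else 0)"

lemma wf_id_crn: "wf_crn id_crn"
  unfolding wf_crn_def id_crn_def by auto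

lemma init_id_crn: "init id_crn [n] = id_config n 0"
  unfolding init_def id_crn_def id_config_def by (auto intro!: ext)

lemma step_id_crn_iff: "step id_crn (id_config a b) c \<longleftrightarrow> 0 < a \<and> c = id_config (a - 1) (b + 1)"
proof
  assume "step id_crn (id_config a b) c"
  then have "1 \<le> a" "c = (\<lambda>s. id_config a b s - (if s = 0 then 1 else 0) + (if s = 1 then 1 else 0))"
    unfolding step_def id_crn_def le_fun_def by (auto dest: spec[of _ 0] simp: id_config_def)
  then show "0 < a \<and> c = id_config (a - 1) (b + 1)" by (auto simp: id_config_def)
next
  assume "0 < a \<and> c = id_config (a - 1) (b + 1)"
  then show "step id_crn (id_config a b) c"
    unfolding step_def id_crn_def by (auto simp: le_fun_def id_config_def intro!: ext)
qed

lemma reach_id_crnD: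
  assumes "reach id_crn (id_config a b) c"
  shows "\<exists>k\<le>a. c = id_config (a - k) (b + k)"
proof -
  have "\<exists>k\<le>a. c = id_config (a - k) (b + k)" if "(step id_crn)\<^sup>*\<^sup>* c0 c" "c0 = id_config a b"
    for c0
    using that
  proof (induction arbitrary: a b rule: converse_rtranclp_induct)
    case base then show ?case by (intro exI[of _ 0]) auto
  next
    case (step c0 z)
    then have "0 < a" "z = id_config (a - 1) (b + 1)" by (simp_all add: step_id_crn_iff)
    with step.IH obtain k where "k \<le> a - 1" "c = id_config (a - 1 - k) (b + 1 + k)" by blast
    with \<open>0 < a\<close> show ?case by (intro exI[of _ "Suc k"]) auto
  qed
  with assms show ?thesis unfolding reach_def by blast
qed

lemma reach_id_crn_final: "reach id_crn (id_config a b) (id_config 0 (a + b))"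
  unfolding reach_def
proof (induction a arbitrary: b)
  case (Suc a)
  have "step id_crn (id_config (Suc a) b) (id_config a (b + 1))" by (simp add: step_id_crn_iff)
  with Suc[of "b + 1"] show ?case by (simp add: converse_rtranclp_into_rtranclp)
qed simp

lemma id_crn_stably_computes: "stably_computes id_crn 1 (\<lambda>xs. xs ! 0)"
  unfolding stably_computes_def
proof (intro conjI allI impI)
  show "length (inputs id_crn) = 1" by (simp add: id_crn_def)
  fix x :: "nat list" and c assume "length x = 1" "reach id_crn (init id_crn x) c"
  then obtain n k where n: "x = [n]" "k \<le> n" "c = id_config (n - k) k"
    by (cases x) (auto simp: init_id_crn dest: reach_id_crnD)
  have "stable id_crn (id_config 0 n)"
    unfolding stable_def by (auto dest!: reach_id_crnD)
  with n reach_id_crn_final[of "n - k" k]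
  show "\<exists>o'. reach id_crn c o' \<and> stable id_crn o' \<and> o' (out_sp id_crn) = x ! 0"
    by (intro exI[of _ "id_config 0 n"]) (auto simp: id_config_def id_crn_def)
qed

text \<open>Configurations of the concatenation after its leader reaction has fired; k counts the
  outputs.\<close>
definition cat_config :: "'a config \<Rightarrow> nat \<Rightarrow> ('a, nat) cspec config" where
  "cat_config c k = (\<lambda>s. case s of SF a \<Rightarrow> c a
                                  | SG t \<Rightarrow> (if t = 1 then k else if t = 2 then 1 else 0)
                                  | SL \<Rightarrow> 0)"

lemma cat_config_SF [simp]: "cat_config c k (SF a) = c a"
  and cat_config_SG1 [simp]: "cat_config c k (SG 1) = k"
  by (simp_all add: cat_config_def)

lemma concat_id_crn_simps [simp]:
  "out_sp (concat_crn Cf id_crn) = SG 1"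
  "inputs (concat_crn Cf id_crn) = map SF (inputs Cf)"
  "leader (concat_crn Cf id_crn) = SL"
  by (auto simp: concat_crn_def id_crn_def emb_g_def)

lemma reactions_concat_id_crn: "reactions (concat_crn Cf id_crn) =
   (\<lambda>(R, P). (lift_f R, lift_f P)) ` reactions Cf
   \<union> {((\<lambda>s. if s = SF (out_sp Cf) then 1 else 0), (\<lambda>s. if s = SG 1 then 1 else 0))}
   \<union> {((\<lambda>s. if s = SL then 1 else 0),
        (\<lambda>s. (if s = SF (leader Cf) then 1 else 0) + (if s = SG 2 then 1 else 0)))}"
  unfolding concat_crn_def
  by (auto simp: id_crn_def lift_g_def emb_g_def intro!: ext split: cspec.splits)

lemma output_oblivious_concat_id_crn: "output_oblivious (concat_crn Cf id_crn)"
  unfolding output_oblivious_def reactions_concat_id_crn by (auto simp: lift_f_def)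

lemma step_concat_id_crn_init:
  "step (concat_crn Cf id_crn) (init (concat_crn Cf id_crn) x) (cat_config (init Cf x) 0)"
  unfolding step_def reactions_concat_id_crn
  by (rule bexI[where x = "((\<lambda>s. if s = SL then 1 else 0),
        (\<lambda>s. (if s = SF (leader Cf) then 1 else 0) + (if s = SG 2 then 1 else 0)))"])
     (auto simp: le_fun_def init_def cat_config_def intro!: ext split: cspec.splits)

lemma step_concat_id_crn_lift:
  assumes "step Cf c c'"
  shows "step (concat_crn Cf id_crn) (cat_config c k) (cat_config c' k)"
proof -
  from assms obtain R P where RP: "(R, P) \<in> reactions Cf" "R \<le> c" "c' = (\<lambda>s. c s - R s + P s)"
    unfolding step_def by auto
  then show ?thesis
    unfolding step_def reactions_concat_id_crn
    by (intro bexI[where x = "(lift_f R, lift_f P)"])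
       (auto simp: le_fun_def cat_config_def lift_f_def intro!: ext split: cspec.splits)
qed

lemma step_concat_id_crn_transfer:
  assumes "0 < c (out_sp Cf)"
  shows "step (concat_crn Cf id_crn) (cat_config c k)
           (cat_config (c(out_sp Cf := c (out_sp Cf) - 1)) (k + 1))"
  unfolding step_def reactions_concat_id_crn
  by (rule bexI[where x = "((\<lambda>s. if s = SF (out_sp Cf) then 1 else 0),
                            (\<lambda>s. if s = SG 1 then 1 else 0))"])
     (use assms in \<open>auto simp: le_fun_def cat_config_def intro!: ext split: cspec.splits\<close>)

lemma reach_concat_id_crn_transfer_all:
  "reach (concat_crn Cf id_crn) (cat_config c k) (cat_config (c(out_sp Cf := 0)) (k + c (out_sp Cf)))"
  unfolding reach_def
proof (induction "c (out_sp Cf)" arbitrary: c k)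
  case 0
  then show ?case by (simp add: fun_upd_idem)
next
  case (Suc n)
  let ?c' = "c(out_sp Cf := n)"
  have "step (concat_crn Cf id_crn) (cat_config c k) (cat_config ?c' (k + 1))"
    using step_concat_id_crn_transfer[of c Cf k] Suc.hyps(2)[symmetric] by simp
  moreover have "(step (concat_crn Cf id_crn))\<^sup>*\<^sup>* (cat_config ?c' (k + 1))
                   (cat_config (c(out_sp Cf := 0)) (k + c (out_sp Cf)))"
    using Suc.hyps(1)[of ?c' "k + 1"] Suc.hyps(2)[symmetric] by simp
  ultimately show ?case by (rule converse_rtranclp_into_rtranclp)
qed

lemma reach_concat_id_crn_of_remove_output_reactant:
  "reach (remove_output_reactant Cf) a b
     \<Longrightarrow> reach (concat_crn Cf id_crn) (cat_config a k) (cat_config b k)"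
  unfolding reach_def
  by (induction rule: rtranclp_induct)
     (auto dest: step_of_remove_output_reactant step_concat_id_crn_lift[where k = k]
           intro: rtranclp.rtrancl_into_rtrancl)

text \<open>Without Y_f present, the transfer reaction is blocked, so every step of the concatenation
  is a step of C_f that does not consume Y_f.\<close>
lemma step_concat_id_crn_no_outputE:
  assumes "step (concat_crn Cf id_crn) (cat_config c k) s'" "c (out_sp Cf) = 0"
  obtains c' where "s' = cat_config c' k" "step (remove_output_reactant Cf) c c'"
proof -
  from assms(1) obtain R P where RP: "(R, P) \<in> reactions (concat_crn Cf id_crn)"
    "R \<le> cat_config c k" "s' = (\<lambda>s. cat_config c k s - R s + P s)"
    unfolding step_def by auto
  have "R (SF (out_sp Cf)) = 0" "R SL = 0"
    using RP(2) assms(2) le_funD[OF RP(2), of "SF (out_sp Cf)"] le_funD[OF RP(2), of SL]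
    by (simp_all add: cat_config_def)
  then obtain R0 P0 where R0: "(R0, P0) \<in> reactions Cf" "R = lift_f R0" "P = lift_f P0"
    using RP(1) unfolding reactions_concat_id_crn by auto
  have le: "R0 \<le> c"
    using RP(2) unfolding R0 le_fun_def by (auto dest: spec[of _ "SF _"] simp: lift_f_def)
  with assms(2) have "R0 (out_sp Cf) = 0" by (metis le_funD le_zero_eq)
  with R0 le have "step (remove_output_reactant Cf) c (\<lambda>s. c s - R0 s + P0 s)"
    unfolding step_def remove_output_reactant_def by auto
  moreover have "s' = cat_config (\<lambda>s. c s - R0 s + P0 s) k"
    unfolding RP(3) R0 by (auto simp: cat_config_def lift_f_def intro!: ext split: cspec.splits)
  ultimately show thesis using that by blast
qed

lemma concat_id_crn_output_increase:
  assumes "reach (concat_crn Cf id_crn) (cat_config a k) s" "a (out_sp Cf) = 0" "k < s (SG 1)"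
  shows "\<exists>a'. reach (remove_output_reactant Cf) a a' \<and> 0 < a' (out_sp Cf)"
proof -
  have "(step (concat_crn Cf id_crn))\<^sup>*\<^sup>* s0 s \<Longrightarrow> s0 = cat_config a k \<Longrightarrow> a (out_sp Cf) = 0
    \<Longrightarrow> \<exists>a'. (step (remove_output_reactant Cf))\<^sup>*\<^sup>* a a' \<and> 0 < a' (out_sp Cf)" for s0
  proof (induction arbitrary: a rule: converse_rtranclp_induct)
    case base with assms(3) show ?case by (simp add: cat_config_def)
  next
    case (step s0 z)
    obtain c' where c': "z = cat_config c' k" "step (remove_output_reactant Cf) a c'"
      using step_concat_id_crn_no_outputE[OF step.hyps(1)[unfolded step.prems(1)] step.prems(2)] .
    show ?case
    proof (cases "0 < c' (out_sp Cf)")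
      case True then show ?thesis using c'(2) by blast
    next
      case False
      with step.IH[OF c'(1)] obtain a' where
        "(step (remove_output_reactant Cf))\<^sup>*\<^sup>* c' a'" "0 < a' (out_sp Cf)" by auto
      with c'(2) show ?thesis by (meson converse_rtranclp_into_rtranclp)
    qed
  qed
  with assms(1,2) show ?thesis unfolding reach_def by blast
qed

lemma reach_concat_id_crn_collected:
  assumes "reach (remove_output_reactant Cf) (init Cf x) b"
  shows "reach (concat_crn Cf id_crn) (init (concat_crn Cf id_crn) x)
           (cat_config (b(out_sp Cf := 0)) (b (out_sp Cf)))"
  using step_imp_reach[OF step_concat_id_crn_init]
    reach_concat_id_crn_of_remove_output_reactant[OF assms, of 0]
    reach_concat_id_crn_transfer_all[of Cf b 0]
  by (metis reach_trans add_0)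

context
  fixes Cf :: "'a crn" and d :: nat and f :: "nat list \<Rightarrow> nat" and x :: "nat list"
  assumes concat_computes: "stably_computes (concat_crn Cf id_crn) d f"
    and length_x: "length x = d"
begin

lemma concat_id_crn_reaches_output:
  assumes "reach (remove_output_reactant Cf) (init Cf x) b"
  obtains s where "reach (concat_crn Cf id_crn) (cat_config (b(out_sp Cf := 0)) (b (out_sp Cf))) s"
    "s (SG 1) = f x"
  using concat_computes reach_concat_id_crn_collected[OF assms] length_x
  unfolding stably_computes_def by fastforce

lemma remove_output_reactant_output_le:
  assumes "reach (remove_output_reactant Cf) (init Cf x) b"
  shows "b (out_sp Cf) \<le> f x"
proof -
  obtain s where "reach (concat_crn Cf id_crn) (cat_config (b(out_sp Cf := 0)) (b (out_sp Cf))) s"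
    "s (SG 1) = f x"
    using concat_id_crn_reaches_output[OF assms] .
  with output_oblivious_reach_out_mono[OF output_oblivious_concat_id_crn, of Cf] show ?thesis
    by (metis cat_config_SG1 concat_id_crn_simps(1))
qed

lemma stable_remove_output_reactant_output_eq:
  assumes reach_b: "reach (remove_output_reactant Cf) (init Cf x) b"
    and stable_b: "stable (remove_output_reactant Cf) b"
  shows "b (out_sp Cf) = f x"
proof (rule ccontr)
  let ?Y = "out_sp Cf"
  assume "b ?Y \<noteq> f x"
  with remove_output_reactant_output_le[OF reach_b] have "b ?Y < f x" by simp
  moreover obtain s where "reach (concat_crn Cf id_crn) (cat_config (b(?Y := 0)) (b ?Y)) s"
    "s (SG 1) = f x"
    using concat_id_crn_reaches_output[OF reach_b] .
  ultimately obtain a' where a': "reach (remove_output_reactant Cf) (b(?Y := 0)) a'" "0 < a' ?Y"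
    using concat_id_crn_output_increase by fastforce
  define v where "v = (\<lambda>s. if s = ?Y then b ?Y else 0)"
  have "(\<lambda>s. (b(?Y := 0)) s + v s) = b" by (auto simp: v_def)
  with reach_add[OF a'(1), of v] have "reach (remove_output_reactant Cf) b (\<lambda>s. a' s + v s)"
    by simp
  with stable_b a'(2) show False by (auto simp: stable_def v_def)
qed

end

theorem lemma3:
  fixes Cf :: "'a crn" and d :: nat and f :: "nat list \<Rightarrow> nat"
  assumes "wf_crn Cf"
    and "stably_computes Cf d f"
    and "\<forall>(g :: nat \<Rightarrow> nat) (Cg :: nat crn).
           wf_crn Cg \<and> stably_computes Cg 1 (\<lambda>xs. g (xs ! 0)) \<longrightarrow>
           stably_computes (concat_crn Cf Cg) d (\<lambda>xs. g (f xs))"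
  shows "output_oblivious (remove_output_reactant Cf) \<and>
         stably_computes (remove_output_reactant Cf) d f"
proof -
  let ?Cr = "remove_output_reactant Cf"
  have concat: "stably_computes (concat_crn Cf id_crn) d f"
    using assms(3)[THEN spec[of _ id], THEN spec[of _ id_crn]] wf_id_crn id_crn_stably_computes
    by simp
  have "\<exists>o'. reach ?Cr c o' \<and> stable ?Cr o' \<and> o' (out_sp Cf) = f x"
    if length_x: "length x = d" and reach_c: "reach ?Cr (init Cf x) c" for x c
  proof -
    obtain b where "reach ?Cr c b" "stable ?Cr b"
    proof (rule output_oblivious_exists_stable[OF output_oblivious_remove_output_reactant])
      show "b (out_sp ?Cr) \<le> f x" if "reach ?Cr c b" for b
        using remove_output_reactant_output_le[OF concat length_x reach_trans[OF reach_c that]]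
        by simp
    qed
    with length_x reach_c stable_remove_output_reactant_output_eq[OF concat]
    show ?thesis by (blast intro: reach_trans)
  qed
  with assms(2) output_oblivious_remove_output_reactant show ?thesis
    by (simp add: stably_computes_def)
qed

end
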